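(* The rational map $\mathbb{P}^2 \dashrightarrow \mathbb{P}^3$, $(r:s:t) \mapsto (w:x:y:z)$ with \[ (w:x:y:z) = (r^3 - s^3 : s^3 + t^3 : r^2s - s^2t + t^2r : r^2t - s^2r - t^2s), \] defined over $\mathbb{Q}$, is a birational map from $\mathbb{P}^2$ onto the cubic surface $S_3: wx(w+x) = y^3 + z^3$. Moreover, for this parametrization $wx(w+x)$, as a homogeneous polynomial of degree $9$ in $r,s,t$, factors over $\mathbb{Q}$ as a product of three linear and three quadratic factors.
   Context: No additional context. *)

theory Defs
  imports Complex_Main
begin

definition hpoly3 :: "nat \<Rightarrow> (nat \<Rightarrow> nat \<Rightarrow> nat \<Rightarrow> rat) \<Rightarrow> complex \<Rightarrow> complex \<Rightarrow> complex \<Rightarrow> complex" where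
  "hpoly3 d c r s t =
     (\<Sum>(i,j,k) \<in> {(i,j,k). i + j + k = d}. of_rat (c i j k) * r ^ i * s ^ j * t ^ k)"

definition hpoly4 :: "nat \<Rightarrow> (nat \<Rightarrow> nat \<Rightarrow> nat \<Rightarrow> nat \<Rightarrow> rat) \<Rightarrow> complex \<Rightarrow> complex \<Rightarrow> complex \<Rightarrow> complex \<Rightarrow> complex" where
  "hpoly4 d c w x y z =
     (\<Sum>(i,j,k,l) \<in> {(i,j,k,l). i + j + k + l = d}.
        of_rat (c i j k l) * w ^ i * x ^ j * y ^ k * z ^ l)"

definition phiW :: "complex \<Rightarrow> complex \<Rightarrow> complex \<Rightarrow> complex" where
  "phiW r s t = r^3 - s^3"
definition phiX :: "complex \<Rightarrow> complex \<Rightarrow> complex \<Rightarrow> complex" where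
  "phiX r s t = s^3 + t^3"
definition phiY :: "complex \<Rightarrow> complex \<Rightarrow> complex \<Rightarrow> complex" where
  "phiY r s t = r^2*s - s^2*t + t^2*r"
definition phiZ :: "complex \<Rightarrow> complex \<Rightarrow> complex \<Rightarrow> complex" where
  "phiZ r s t = r^2*t - s^2*r - t^2*s"

text \<open>The cubic surface S_3 : wx(w+x) = y^3 + z^3 (complex points of the affine cone).\<close>

definition onS3 :: "complex \<Rightarrow> complex \<Rightarrow> complex \<Rightarrow> complex \<Rightarrow> bool" where
  "onS3 w x y z \<longleftrightarrow> w * x * (w + x) = y^3 + z^3"

definition proportional3 :: "complex \<Rightarrow> complex \<Rightarrow> complex \<Rightarrow> complex \<Rightarrow> complex \<Rightarrow> complex \<Rightarrow> bool" where
  "proportional3 a b c a' b' c' \<longleftrightarrow> a*b' = b*a' \<and> a*c' = c*a' \<and> b*c' = c*b'"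

definition proportional4 :: "complex \<Rightarrow> complex \<Rightarrow> complex \<Rightarrow> complex \<Rightarrow>
     complex \<Rightarrow> complex \<Rightarrow> complex \<Rightarrow> complex \<Rightarrow> bool" where
  "proportional4 a b c d a' b' c' d' \<longleftrightarrow>
     a*b' = b*a' \<and> a*c' = c*a' \<and> a*d' = d*a' \<and> b*c' = c*b' \<and> b*d' = d*b' \<and> c*d' = d*c'"

text \<open>Birationality of the map phi from P^2 onto S_3, defined over Q: phi maps into S_3,
and there is a rational map psi : S_3 --> P^2 given by homogeneous forms A, B, C over Q of
a common degree d such that psi o phi = id (as rational maps of P^2) and
phi o psi = id (as rational maps of S_3). Since P^2 and S_3 are irreducible, the
compositions being the identity on a dense open set is equivalent to the vanishing of the
minors everywhere together with the compositions being defined somewhere.\<close>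

definition phi_birational_onto_S3 :: bool where
  "phi_birational_onto_S3 \<longleftrightarrow>
     (\<forall>r s t. onS3 (phiW r s t) (phiX r s t) (phiY r s t) (phiZ r s t)) \<and>
     (\<exists>d cA cB cC.
        let A = hpoly4 d cA; B = hpoly4 d cB; C = hpoly4 d cC in
        (\<forall>r s t. proportional3
            (A (phiW r s t) (phiX r s t) (phiY r s t) (phiZ r s t))
            (B (phiW r s t) (phiX r s t) (phiY r s t) (phiZ r s t))
            (C (phiW r s t) (phiX r s t) (phiY r s t) (phiZ r s t)) r s t) \<and>
        (\<exists>r s t. (A (phiW r s t) (phiX r s t) (phiY r s t) (phiZ r s t),
                  B (phiW r s t) (phiX r s t) (phiY r s t) (phiZ r s t),
                  C (phiW r s t) (phiX r s t) (phiY r s t) (phiZ r s t)) \<noteq> (0, 0, 0)) \<and>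
        (\<forall>w x y z. onS3 w x y z \<longrightarrow>
           proportional4
             (phiW (A w x y z) (B w x y z) (C w x y z))
             (phiX (A w x y z) (B w x y z) (C w x y z))
             (phiY (A w x y z) (B w x y z) (C w x y z))
             (phiZ (A w x y z) (B w x y z) (C w x y z)) w x y z) \<and>
        (\<exists>w x y z. onS3 w x y z \<and>
           (phiW (A w x y z) (B w x y z) (C w x y z),
            phiX (A w x y z) (B w x y z) (C w x y z),
            phiY (A w x y z) (B w x y z) (C w x y z),
            phiZ (A w x y z) (B w x y z) (C w x y z)) \<noteq> (0, 0, 0, 0)))"

definition irreducible_quadratic_Q :: "(nat \<Rightarrow> nat \<Rightarrow> nat \<Rightarrow> rat) \<Rightarrow> bool" where
  "irreducible_quadratic_Q q \<longleftrightarrow>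
     \<not> (\<exists>l1 l2. \<forall>r s t. hpoly3 2 q r s t = hpoly3 1 l1 r s t * hpoly3 1 l2 r s t)"

end

theory Submission
  imports Defs
begin

text \<open>Each of \<open>w = r\<^sup>3 - s\<^sup>3\<close>, \<open>x = s\<^sup>3 + t\<^sup>3\<close> and \<open>w + x = r\<^sup>3 + t\<^sup>3\<close> is a sum or
difference of two cubes, and so splits into a linear and a quadratic factor over \<open>\<rat>\<close>. A
quadratic factor has no rational linear factors because on a suitable rational line it becomes
\<open>u\<^sup>2 \<plusminus> u + 1\<close>, which has negative discriminant.

The inverse of \<open>\<phi>\<close> is \<open>\<psi>(w:x:y:z) = (y\<^sup>2 - wz : wx - yz : xy - z\<^sup>2)\<close>: the composite \<open>\<psi> \<circ> \<phi>\<close>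
multiplies \<open>(r, s, t)\<close> by a quintic form, and on \<open>S\<^sub>3\<close> the composite \<open>\<phi> \<circ> \<psi>\<close> multiplies
\<open>(w, x, y, z)\<close> by a quintic form, so both composites are the identity wherever they are
defined.\<close>

lemma hpoly3_linear:
  "hpoly3 1 c r s t = of_rat (c 1 0 0) * r + of_rat (c 0 1 0) * s + of_rat (c 0 0 1) * t"
proof -
  have monomials: "{(i,j,k). i + j + k = (1::nat)} = {(1,0,0), (0,1,0), (0,0,1)}"
    (is "?exponents = ?monomials")
  proof
    show "?exponents \<subseteq> ?monomials"
      by (clarsimp; presburger)
  qed simp
  show ?thesis
    unfolding hpoly3_def monomials by (simp add: algebra_simps)
qed

lemma hpoly3_quadratic:
  "hpoly3 2 c r s t =
     of_rat (c 2 0 0) * r\<^sup>2 + of_rat (c 0 2 0) * s\<^sup>2 + of_rat (c 0 0 2) * t\<^sup>2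
     + of_rat (c 1 1 0) * r * s + of_rat (c 1 0 1) * r * t + of_rat (c 0 1 1) * s * t"
proof -
  have monomials:
    "{(i,j,k). i + j + k = (2::nat)} = {(2,0,0), (0,2,0), (0,0,2), (1,1,0), (1,0,1), (0,1,1)}"
    (is "?exponents = ?monomials")
  proof
    show "?exponents \<subseteq> ?monomials"
      by (clarsimp; presburger)
  qed simp
  show ?thesis
    unfolding hpoly3_def monomials by (simp add: algebra_simps)
qed

lemma hpoly4_quadratic:
  "hpoly4 2 c w x y z =
     of_rat (c 2 0 0 0) * w\<^sup>2 + of_rat (c 0 2 0 0) * x\<^sup>2 + of_rat (c 0 0 2 0) * y\<^sup>2
     + of_rat (c 0 0 0 2) * z\<^sup>2 + of_rat (c 1 1 0 0) * w * x + of_rat (c 1 0 1 0) * w * y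
     + of_rat (c 1 0 0 1) * w * z + of_rat (c 0 1 1 0) * x * y + of_rat (c 0 1 0 1) * x * z
     + of_rat (c 0 0 1 1) * y * z"
proof -
  have monomials: "{(i,j,k,l). i + j + k + l = (2::nat)} =
      {(2,0,0,0), (0,2,0,0), (0,0,2,0), (0,0,0,2), (1,1,0,0),
       (1,0,1,0), (1,0,0,1), (0,1,1,0), (0,1,0,1), (0,0,1,1)}"
    (is "?exponents = ?monomials")
  proof
    show "?exponents \<subseteq> ?monomials"
      by (clarsimp; presburger)
  qed simp
  show ?thesis
    unfolding hpoly4_def monomials by (simp add: algebra_simps)
qed

definition linear_coeffs :: "rat \<Rightarrow> rat \<Rightarrow> rat \<Rightarrow> nat \<Rightarrow> nat \<Rightarrow> nat \<Rightarrow> rat" where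
  "linear_coeffs a b c i j k =
     (if (i,j,k) = (1,0,0) then a else if (i,j,k) = (0,1,0) then b
      else if (i,j,k) = (0,0,1) then c else 0)"

definition quadratic_coeffs ::
    "rat \<Rightarrow> rat \<Rightarrow> rat \<Rightarrow> rat \<Rightarrow> rat \<Rightarrow> rat \<Rightarrow> nat \<Rightarrow> nat \<Rightarrow> nat \<Rightarrow> rat" where
  "quadratic_coeffs a b c d e f i j k =
     (if (i,j,k) = (2,0,0) then a else if (i,j,k) = (0,2,0) then b
      else if (i,j,k) = (0,0,2) then c else if (i,j,k) = (1,1,0) then d
      else if (i,j,k) = (1,0,1) then e else if (i,j,k) = (0,1,1) then f else 0)"

lemma hpoly3_linear_coeffs:
  "hpoly3 1 (linear_coeffs a b c) r s t = of_rat a * r + of_rat b * s + of_rat c * t"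
  unfolding hpoly3_linear linear_coeffs_def by simp

lemma hpoly3_quadratic_coeffs:
  "hpoly3 2 (quadratic_coeffs a b c d e f) r s t =
     of_rat a * r\<^sup>2 + of_rat b * s\<^sup>2 + of_rat c * t\<^sup>2
     + of_rat d * r * s + of_rat e * r * t + of_rat f * s * t"
  unfolding hpoly3_quadratic quadratic_coeffs_def by simp

lemma product_of_affine_has_root:
  fixes a b c d e f :: "'a::field_char_0"
  assumes product: "\<And>u. (a * u + b) * (c * u + d) = u\<^sup>2 + e * u + f"
  shows "\<exists>u. u\<^sup>2 + e * u + f = 0"
proof (cases "a = 0 \<and> c = 0")
  case True
  then have "1 + e = 0" "1 - e = 0"
    using product[of 0] product[of 1] product[of "-1"] by simp_all
  then have "(2::'a) = 0"
    by (simp add: algebra_simps)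
  then show ?thesis
    by simp
next
  case False
  then have "a * (- b / a) + b = 0 \<or> c * (- d / c) + d = 0"
    by auto
  then show ?thesis
    using product by (metis mult_eq_0_iff)
qed

lemma quadratic_nonzero_if_discriminant_neg:
  fixes e f u :: "'a::linordered_field"
  assumes "e\<^sup>2 < 4 * f"
  shows "u\<^sup>2 + e * u + f \<noteq> 0"
proof -
  have "4 * (u\<^sup>2 + e * u + f) = (2 * u + e)\<^sup>2 + (4 * f - e\<^sup>2)"
    by (simp add: power2_eq_square algebra_simps)
  moreover have "(2 * u + e)\<^sup>2 \<ge> 0"
    by simp
  ultimately have "4 * (u\<^sup>2 + e * u + f) > 0"
    using assms by linarith
  then show ?thesis
    by auto
qed

lemma irreducible_quadratic_Q_if_rootless_on_line:
  fixes q :: "nat \<Rightarrow> nat \<Rightarrow> nat \<Rightarrow> rat" and a b c a' b' c' e f :: rat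
  assumes on_line: "\<And>u. hpoly3 2 q (of_rat (a + u * a')) (of_rat (b + u * b'))
                          (of_rat (c + u * c')) = of_rat (u\<^sup>2 + e * u + f)"
    and rootless: "\<And>u. u\<^sup>2 + e * u + f \<noteq> 0"
  shows "irreducible_quadratic_Q q"
  unfolding irreducible_quadratic_Q_def
proof
  assume "\<exists>l1 l2. \<forall>r s t. hpoly3 2 q r s t = hpoly3 1 l1 r s t * hpoly3 1 l2 r s t"
  then obtain l1 l2
    where factors: "\<And>r s t. hpoly3 2 q r s t = hpoly3 1 l1 r s t * hpoly3 1 l2 r s t"
    by blast
  define val :: "(nat \<Rightarrow> nat \<Rightarrow> nat \<Rightarrow> rat) \<Rightarrow> rat \<Rightarrow> rat \<Rightarrow> rat \<Rightarrow> rat"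
    where "val l x y z = l 1 0 0 * x + l 0 1 0 * y + l 0 0 1 * z" for l x y z
  have affine: "hpoly3 1 l (of_rat (a + u * a')) (of_rat (b + u * b')) (of_rat (c + u * c'))
      = of_rat (val l a' b' c' * u + val l a b c)" for l u
    unfolding hpoly3_linear val_def by (simp add: of_rat_add of_rat_mult algebra_simps)
  have "(val l1 a' b' c' * u + val l1 a b c) * (val l2 a' b' c' * u + val l2 a b c)
      = u\<^sup>2 + e * u + f" for u
    using on_line[of u] unfolding factors affine by (metis of_rat_eq_iff of_rat_mult)
  then show False
    using product_of_affine_has_root rootless by blast
qed

lemma phi_wx_w_plus_x_factorization:
  "phiW r s t * phiX r s t * (phiW r s t + phiX r s t) =
     hpoly3 1 (linear_coeffs 1 (-1) 0) r s t * hpoly3 1 (linear_coeffs 0 1 1) r s t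
     * hpoly3 1 (linear_coeffs 1 0 1) r s t
     * hpoly3 2 (quadratic_coeffs 1 1 0 1 0 0) r s t
     * hpoly3 2 (quadratic_coeffs 0 1 1 0 0 (-1)) r s t
     * hpoly3 2 (quadratic_coeffs 1 0 1 0 (-1) 0) r s t"
proof -
  have w: "phiW r s t = (r - s) * (r\<^sup>2 + r * s + s\<^sup>2)"
    unfolding phiW_def by algebra
  have x: "phiX r s t = (s + t) * (s\<^sup>2 - s * t + t\<^sup>2)"
    unfolding phiX_def by algebra
  have w_plus_x: "phiW r s t + phiX r s t = (r + t) * (r\<^sup>2 - r * t + t\<^sup>2)"
    unfolding phiW_def phiX_def by algebra
  show ?thesis
    unfolding w_plus_x unfolding w x hpoly3_linear_coeffs hpoly3_quadratic_coeffs
    by (simp add: algebra_simps)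
qed

lemma irreducible_quadratic_factors:
  "irreducible_quadratic_Q (quadratic_coeffs 1 1 0 1 0 0)"
  "irreducible_quadratic_Q (quadratic_coeffs 0 1 1 0 0 (-1))"
  "irreducible_quadratic_Q (quadratic_coeffs 1 0 1 0 (-1) 0)"
proof -
  have rootless: "u\<^sup>2 + u + 1 \<noteq> 0" "u\<^sup>2 - u + 1 \<noteq> 0" for u :: rat
    using quadratic_nonzero_if_discriminant_neg[of 1 1 u]
      quadratic_nonzero_if_discriminant_neg[of "-1" 1 u]
    by simp_all
  show "irreducible_quadratic_Q (quadratic_coeffs 1 1 0 1 0 0)"
    by (rule irreducible_quadratic_Q_if_rootless_on_line[where a = 0 and a' = 1 and b = 1
          and b' = 0 and c = 0 and c' = 0 and e = 1 and f = 1])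
      (simp_all add: hpoly3_quadratic_coeffs rootless of_rat_add of_rat_mult of_rat_power)
  show "irreducible_quadratic_Q (quadratic_coeffs 0 1 1 0 0 (-1))"
    by (rule irreducible_quadratic_Q_if_rootless_on_line[where a = 0 and a' = 0 and b = 1
          and b' = 0 and c = 0 and c' = 1 and e = "-1" and f = 1])
      (simp add: hpoly3_quadratic_coeffs of_rat_add of_rat_diff of_rat_mult of_rat_power
        algebra_simps, simp add: rootless)
  show "irreducible_quadratic_Q (quadratic_coeffs 1 0 1 0 (-1) 0)"
    by (rule irreducible_quadratic_Q_if_rootless_on_line[where a = 0 and a' = 1 and b = 0
          and b' = 0 and c = 1 and c' = 0 and e = "-1" and f = 1])
      (simp add: hpoly3_quadratic_coeffs of_rat_add of_rat_diff of_rat_mult of_rat_power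
        algebra_simps, simp add: rootless)
qed

lemma proportional3_scaled: "proportional3 (h * a) (h * b) (h * c) a b c"
  unfolding proportional3_def by (simp add: ac_simps)

lemma proportional4_scaled: "proportional4 (h * a) (h * b) (h * c) (h * d) a b c d"
  unfolding proportional4_def by (simp add: ac_simps)

lemma phi_on_S3: "onS3 (phiW r s t) (phiX r s t) (phiY r s t) (phiZ r s t)"
  unfolding onS3_def phiW_def phiX_def phiY_def phiZ_def by algebra

definition psi_r_coeffs :: "nat \<Rightarrow> nat \<Rightarrow> nat \<Rightarrow> nat \<Rightarrow> rat" where
  "psi_r_coeffs i j k l =
     (if (i,j,k,l) = (0,0,2,0) then 1 else if (i,j,k,l) = (1,0,0,1) then -1 else 0)"

definition psi_s_coeffs :: "nat \<Rightarrow> nat \<Rightarrow> nat \<Rightarrow> nat \<Rightarrow> rat" where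
  "psi_s_coeffs i j k l =
     (if (i,j,k,l) = (1,1,0,0) then 1 else if (i,j,k,l) = (0,0,1,1) then -1 else 0)"

definition psi_t_coeffs :: "nat \<Rightarrow> nat \<Rightarrow> nat \<Rightarrow> nat \<Rightarrow> rat" where
  "psi_t_coeffs i j k l =
     (if (i,j,k,l) = (0,1,1,0) then 1 else if (i,j,k,l) = (0,0,0,2) then -1 else 0)"

lemma hpoly4_psi_coeffs:
  "hpoly4 2 psi_r_coeffs w x y z = y\<^sup>2 - w * z"
  "hpoly4 2 psi_s_coeffs w x y z = w * x - y * z"
  "hpoly4 2 psi_t_coeffs w x y z = x * y - z\<^sup>2"
  unfolding hpoly4_quadratic psi_r_coeffs_def psi_s_coeffs_def psi_t_coeffs_def by simp_all

definition psi_phi_factor :: "complex \<Rightarrow> complex \<Rightarrow> complex \<Rightarrow> complex" where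
  "psi_phi_factor r s t =
     2 * r^3 * s^2 - r^4 * t + 3 * r^2 * s * t^2 - r * s^3 * t + r * t^4 - s^5 - 2 * s^2 * t^3"

definition phi_psi_factor :: "complex \<Rightarrow> complex \<Rightarrow> complex \<Rightarrow> complex \<Rightarrow> complex" where
  "phi_psi_factor w x y z =
     w^3 * x^2 + w^2 * x^3 - 3 * w^2 * x * y * z - w^2 * z^3 + w * x^4 - w * x * z^3
     + 3 * w * y^2 * z^2 - x^2 * z^3 - 3 * x * y^2 * z^2 + 3 * y * z^4"

lemma psi_phi:
  "(phiY r s t)\<^sup>2 - phiW r s t * phiZ r s t = psi_phi_factor r s t * r"
  "phiW r s t * phiX r s t - phiY r s t * phiZ r s t = psi_phi_factor r s t * s"
  "phiX r s t * phiY r s t - (phiZ r s t)\<^sup>2 = psi_phi_factor r s t * t"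
  unfolding psi_phi_factor_def phiW_def phiX_def phiY_def phiZ_def by algebra+

lemma phi_psi:
  assumes "onS3 w x y z"
  shows "phiW (y\<^sup>2 - w * z) (w * x - y * z) (x * y - z\<^sup>2) = phi_psi_factor w x y z * w"
    and "phiX (y\<^sup>2 - w * z) (w * x - y * z) (x * y - z\<^sup>2) = phi_psi_factor w x y z * x"
    and "phiY (y\<^sup>2 - w * z) (w * x - y * z) (x * y - z\<^sup>2) = phi_psi_factor w x y z * y"
    and "phiZ (y\<^sup>2 - w * z) (w * x - y * z) (x * y - z\<^sup>2) = phi_psi_factor w x y z * z"
  using assms unfolding onS3_def phi_psi_factor_def phiW_def phiX_def phiY_def phiZ_def
  by algebra+

lemma phi_is_birational_onto_S3: phi_birational_onto_S3
proof -
  define A B C where "A = hpoly4 2 psi_r_coeffs" and "B = hpoly4 2 psi_s_coeffs"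
    and "C = hpoly4 2 psi_t_coeffs"
  note psi = A_def B_def C_def hpoly4_psi_coeffs
  have "proportional3 (A (phiW r s t) (phiX r s t) (phiY r s t) (phiZ r s t))
      (B (phiW r s t) (phiX r s t) (phiY r s t) (phiZ r s t))
      (C (phiW r s t) (phiX r s t) (phiY r s t) (phiZ r s t)) r s t" for r s t
    unfolding psi psi_phi by (rule proportional3_scaled)
  moreover have "(A (phiW 0 1 0) (phiX 0 1 0) (phiY 0 1 0) (phiZ 0 1 0),
      B (phiW 0 1 0) (phiX 0 1 0) (phiY 0 1 0) (phiZ 0 1 0),
      C (phiW 0 1 0) (phiX 0 1 0) (phiY 0 1 0) (phiZ 0 1 0)) \<noteq> (0, 0, 0)"
    unfolding psi psi_phi by (simp add: psi_phi_factor_def)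
  moreover have "proportional4 (phiW (A w x y z) (B w x y z) (C w x y z))
      (phiX (A w x y z) (B w x y z) (C w x y z)) (phiY (A w x y z) (B w x y z) (C w x y z))
      (phiZ (A w x y z) (B w x y z) (C w x y z)) w x y z" if "onS3 w x y z" for w x y z
    unfolding psi phi_psi[OF that] by (rule proportional4_scaled)
  moreover have on_S3: "onS3 0 1 1 (-1)"
    by (simp add: onS3_def)
  moreover have "(phiW (A 0 1 1 (-1)) (B 0 1 1 (-1)) (C 0 1 1 (-1)),
      phiX (A 0 1 1 (-1)) (B 0 1 1 (-1)) (C 0 1 1 (-1)),
      phiY (A 0 1 1 (-1)) (B 0 1 1 (-1)) (C 0 1 1 (-1)),
      phiZ (A 0 1 1 (-1)) (B 0 1 1 (-1)) (C 0 1 1 (-1))) \<noteq> (0, 0, 0, 0)"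
    unfolding psi phi_psi[OF on_S3] by (simp add: phi_psi_factor_def)
  ultimately show ?thesis
    unfolding phi_birational_onto_S3_def Let_def A_def B_def C_def using phi_on_S3 by blast
qed

theorem mainTheorem17:
  shows "phi_birational_onto_S3 \<and>
    (\<exists>l1 l2 l3 q1 q2 q3.
       irreducible_quadratic_Q q1 \<and> irreducible_quadratic_Q q2 \<and> irreducible_quadratic_Q q3 \<and>
       (\<forall>r s t. phiW r s t * phiX r s t * (phiW r s t + phiX r s t) =
          hpoly3 1 l1 r s t * hpoly3 1 l2 r s t * hpoly3 1 l3 r s t *
          hpoly3 2 q1 r s t * hpoly3 2 q2 r s t * hpoly3 2 q3 r s t))"
  using phi_is_birational_onto_S3 irreducible_quadratic_factors phi_wx_w_plus_x_factorization
  by blast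

end
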